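(* Let $f(x,\theta)$ be a model, differentiable in its parameters $\theta\in\mathbb{R}^d$, and let $\mathcal{L}(\hat y, y)$ be a loss function. Let $\boldsymbol{\theta^{(t-1)}} = [\theta^L,\theta^U]\subseteq\mathbb{R}^d$ be an interval parameter domain. Let $\mathcal{B}^{(t)} = \{(\tilde x^{(i)},\tilde y^{(i)})\}_{i=1}^b$ be a nominal batch of size $b$, and let $n$ be an integer with $0\le n<b$. For each $i$, let $\delta_L^{(t,i)},\delta_U^{(t,i)}\in\mathbb{R}^d$ satisfy, element-wise, $$\delta_L^{(t,i)}\le \nabla_\theta\mathcal{L}\big(f(\tilde x^{(i)},\theta'),\tilde y^{(i)}\big)\le \delta_U^{(t,i)}\quad\text{for all }\theta'\in\boldsymbol{\theta^{(t-1)}}.$$ Then for every $\theta^{(t-1)}\in\boldsymbol{\theta^{(t-1)}}$ and every perturbed batch $\tilde{\mathcal{B}}^{(t)}$ obtained from $\mathcal{B}^{(t)}$ by removing up to $n$ data points, the descent direction $$\Delta\theta^{(t)} = \frac{1}{|\tilde{\mathcal{B}}^{(t)}|}\sum_{(\tilde x^{(i)},\tilde y^{(i)})\in\tilde{\mathcal{B}}^{(t)}}\nabla_\theta\mathcal{L}\big(f(\tilde x^{(i)},\theta^{(t-1)}),\tilde y^{(i)}\big)$$ satisfies, element-wise, $\Delta\theta_L^{(t)}\le\Delta\theta^{(t)}\le\Delta\theta_U^{(t)}$, where $$\Delta\theta_L^{(t)} = \frac{1}{b-n}\,\operatorname{SEMin}_{b-n}\{\delta_L^{(t,i)}\}_{i=1}^b,\qquad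 \Delta\theta_U^{(t)} = \frac{1}{b-n}\,\operatorname{SEMax}_{b-n}\{\delta_U^{(t,i)}\}_{i=1}^b.$$
   Context: An interval domain $[\theta^L,\theta^U]\subseteq\mathbb{R}^d$ is the set of $\theta$ with $\theta^L_j\le\theta_j\le\theta^U_j$ for all $j$. For a collection of vectors $\{v^{(i)}\}_{i=1}^b\subseteq\mathbb{R}^d$ and an integer $a\le b$, $\operatorname{SEMax}_a\{v^{(i)}\}$ is the vector whose $j$-th entry is the sum of the $a$ largest values among $v^{(1)}_j,\dots,v^{(b)}_j$, and $\operatorname{SEMin}_a\{v^{(i)}\}$ is the vector whose $j$-th entry is the sum of the $a$ smallest values among $v^{(1)}_j,\dots,v^{(b)}_j$ (computed independently at each index $j$). *)

theory Defs
  imports "HOL-Analysis.Analysis"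
begin

definition interval_dom :: "real^'d \<Rightarrow> real^'d \<Rightarrow> (real^'d) set" where
  "interval_dom thL thU = {th. \<forall>j. thL $ j \<le> th $ j \<and> th $ j \<le> thU $ j}"

text \<open>SEMin_a / SEMax_a of the collection v 0, ..., v (b-1) (indices shifted to 0..b-1):
  at each coordinate j, the sum of the a smallest / a largest values among v i $ j.\<close>
definition SEMin :: "nat \<Rightarrow> nat \<Rightarrow> (nat \<Rightarrow> real^'d) \<Rightarrow> real^'d" where
  "SEMin a b v = (\<chi> j. sum_list (take a (sort (map (\<lambda>i. v i $ j) [0..<b]))))"

definition SEMax :: "nat \<Rightarrow> nat \<Rightarrow> (nat \<Rightarrow> real^'d) \<Rightarrow> real^'d" where
  "SEMax a b v = (\<chi> j. sum_list (take a (rev (sort (map (\<lambda>i. v i $ j) [0..<b])))))"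

end

theory Submission
  imports Defs
begin

text \<open>Let \<open>t\<close> be the \<open>m\<close>-th smallest of the reals \<open>a\<^sub>i\<close>, \<open>i < b\<close>. The sum of the \<open>m\<close>
  smallest values is \<open>m t - \<Sum>\<^sub>i (t - a\<^sub>i)\<^sup>+\<close>, so their mean is \<open>t - (1/m) \<Sum>\<^sub>i (t - a\<^sub>i)\<^sup>+\<close>.
  For an index set \<open>S\<close> of size \<open>k \<ge> m\<close> this is at most
  \<open>t - (1/k) \<Sum>\<^sub>i\<^sub>\<in>\<^sub>S (t - a\<^sub>i)\<^sup>+ = (1/k) \<Sum>\<^sub>i\<^sub>\<in>\<^sub>S min t a\<^sub>i\<close>, hence at most the mean of the
  \<open>a\<^sub>i\<close> over \<open>S\<close>. Applied coordinatewise to the gradient bounds, and to their negations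
  for the upper bound, this traps the mean gradient over any batch of at least \<open>b - n\<close>
  points between the normalised \<open>SEMin\<close> and \<open>SEMax\<close>.\<close>

lemma sum_list_map_sort:
  fixes h :: "'a::linorder \<Rightarrow> 'b::comm_monoid_add"
  shows "sum_list (map h (sort xs)) = sum_list (map h xs)"
  by (metis mset_map mset_sort sum_mset_sum_list)

lemma sum_list_take_sort_threshold:
  fixes xs :: "real list"
  assumes "0 < m" "m \<le> length xs"
  defines "t \<equiv> sort xs ! (m - 1)"
  shows "sum_list (take m (sort xs)) = m * t - sum_list (map (\<lambda>x. max 0 (t - x)) xs)"
proof -
  let ?ys = "sort xs" and ?h = "\<lambda>x. max 0 (t - x)"
  have below: "y \<le> t" if y_in: "y \<in> set (take m ?ys)" for y
  proof -
    obtain i where "i < m" "y = ?ys ! i"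
      using y_in assms(2) by (auto simp: in_set_conv_nth)
    then show ?thesis
      using assms(2) sorted_nth_mono[OF sorted_sort[of xs], of i "m - 1"] by (simp add: t_def)
  qed
  have above: "t \<le> y" if y_in: "y \<in> set (drop m ?ys)" for y
  proof -
    obtain i where "m + i < length xs" "y = ?ys ! (m + i)"
      using y_in assms(2) by (auto simp: in_set_conv_nth) (metis add.commute less_diff_conv)
    then show ?thesis
      using sorted_nth_mono[OF sorted_sort[of xs], of "m - 1" "m + i"] by (simp add: t_def)
  qed
  have "sum_list (map ?h xs) = sum_list (map ?h ?ys)"
    by (rule sum_list_map_sort[symmetric])
  also have "\<dots> = sum_list (map ?h (take m ?ys)) + sum_list (map ?h (drop m ?ys))"
    by (simp flip: sum_list_append map_append)
  also have "map ?h (take m ?ys) = map (\<lambda>y. t - y) (take m ?ys)"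
    using below by simp
  also have "map ?h (drop m ?ys) = map (\<lambda>_. 0) (drop m ?ys)"
    using above by simp
  finally show ?thesis
    using assms(2) by (simp add: sum_list_subtractf sum_list_triv)
qed

lemma mean_smallest_le_mean_subset:
  fixes a :: "nat \<Rightarrow> real"
  assumes S: "S \<subseteq> {..<b}" and m: "0 < m" "m \<le> card S"
  shows "sum_list (take m (sort (map a [0..<b]))) / m \<le> (\<Sum>i\<in>S. a i) / card S"
proof -
  define t where "t = sort (map a [0..<b]) ! (m - 1)"
  define h where "h = (\<lambda>x. max 0 (t - x))"
  have "card S \<le> b"
    using card_mono[OF finite_lessThan S] by simp
  then have sum_smallest: "sum_list (take m (sort (map a [0..<b]))) = m * t - (\<Sum>i<b. h (a i))"
    using m sum_list_take_sort_threshold[of m "map a [0..<b]"]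
    by (simp add: t_def h_def interv_sum_list_conv_sum_set_nat lessThan_atLeast0)
  have "card S > 0"
    using m by simp
  have "(\<Sum>i\<in>S. h (a i)) / card S \<le> (\<Sum>i<b. h (a i)) / m"
    using S m by (intro frac_le sum_nonneg sum_mono2) (auto simp: h_def)
  then have "sum_list (take m (sort (map a [0..<b]))) / m \<le> t - (\<Sum>i\<in>S. h (a i)) / card S"
    using m unfolding sum_smallest by (simp add: diff_divide_distrib)
  also have "\<dots> = (\<Sum>i\<in>S. t - h (a i)) / card S"
    using \<open>card S > 0\<close> by (simp add: sum_subtractf diff_divide_distrib)
  also have "\<dots> \<le> (\<Sum>i\<in>S. a i) / card S"
    by (intro divide_right_mono sum_mono) (auto simp: h_def)
  finally show ?thesis .
qed

lemma rev_sort_map_uminus: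
  fixes xs :: "'a::linordered_ab_group_add list"
  shows "rev (sort (map uminus xs)) = map uminus (sort xs)"
proof -
  have "sort (map uminus xs) = rev (map uminus (sort xs))"
    by (rule properties_for_sort) (auto simp: rev_map sorted_wrt_map sorted_wrt_rev)
  then show ?thesis by simp
qed

lemma mean_subset_le_mean_largest:
  fixes a :: "nat \<Rightarrow> real"
  assumes "S \<subseteq> {..<b}" "0 < m" "m \<le> card S"
  shows "(\<Sum>i\<in>S. a i) / card S \<le> sum_list (take m (rev (sort (map a [0..<b])))) / m"
proof -
  let ?neg = "map (\<lambda>i. - a i) [0..<b]"
  have "sum_list (take m (rev (sort (map a [0..<b])))) = - sum_list (take m (sort ?neg))"
    using rev_sort_map_uminus[of ?neg]
    by (simp add: take_map comp_def uminus_sum_list_map[where f = id, simplified])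
  moreover have "sum_list (take m (sort ?neg)) / m \<le> (\<Sum>i\<in>S. - a i) / card S"
    using mean_smallest_le_mean_subset[OF assms] .
  ultimately show ?thesis
    by (simp add: sum_negf)
qed

theorem mainTheorem1:
  fixes f :: "'x \<Rightarrow> real^'d \<Rightarrow> 'o::real_normed_vector"
    and L :: "'o \<Rightarrow> 'y \<Rightarrow> real"
    and grad :: "'x \<Rightarrow> 'y \<Rightarrow> real^'d \<Rightarrow> real^'d"
    and thL thU :: "real^'d"
    and xs :: "nat \<Rightarrow> 'x" and ys :: "nat \<Rightarrow> 'y"
    and b n :: nat
    and dL dU :: "nat \<Rightarrow> real^'d"
    and th :: "real^'d"
    and S :: "nat set"
  assumes f_diff: "\<And>x th'. f x differentiable (at th')"
    and grad: "\<And>i th'. i < b \<Longrightarrow> th' \<in> interval_dom thL thU \<Longrightarrow>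
        ((\<lambda>t. L (f (xs i) t) (ys i)) has_derivative (\<lambda>h. grad (xs i) (ys i) th' \<bullet> h)) (at th')"
    and n_lt: "n < b"
    and dL_bound: "\<And>i th' j. i < b \<Longrightarrow> th' \<in> interval_dom thL thU \<Longrightarrow>
        dL i $ j \<le> grad (xs i) (ys i) th' $ j"
    and dU_bound: "\<And>i th' j. i < b \<Longrightarrow> th' \<in> interval_dom thL thU \<Longrightarrow>
        grad (xs i) (ys i) th' $ j \<le> dU i $ j"
    and th_in: "th \<in> interval_dom thL thU"
    and S_sub: "S \<subseteq> {..<b}"
    and S_card: "b - n \<le> card S"
  shows "\<forall>j. (1 / real (b - n)) * SEMin (b - n) b dL $ j
              \<le> ((1 / real (card S)) *\<^sub>R (\<Sum>i\<in>S. grad (xs i) (ys i) th)) $ j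
         \<and> ((1 / real (card S)) *\<^sub>R (\<Sum>i\<in>S. grad (xs i) (ys i) th)) $ j
              \<le> (1 / real (b - n)) * SEMax (b - n) b dU $ j"
proof (intro allI conjI)
  fix j
  let ?g = "\<lambda>i. grad (xs i) (ys i) th $ j"
  have m: "0 < b - n"
    using n_lt by simp
  have in_batch: "i < b" if "i \<in> S" for i
    using S_sub that by auto
  have mean: "((1 / real (card S)) *\<^sub>R (\<Sum>i\<in>S. grad (xs i) (ys i) th)) $ j
      = (\<Sum>i\<in>S. ?g i) / card S"
    by (simp add: sum_component)
  have "(1 / real (b - n)) * SEMin (b - n) b dL $ j \<le> (\<Sum>i\<in>S. dL i $ j) / card S"
    using mean_smallest_le_mean_subset[OF S_sub m S_card] by (simp add: SEMin_def)
  also have "\<dots> \<le> (\<Sum>i\<in>S. ?g i) / card S"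
    using dL_bound[OF in_batch th_in] by (intro divide_right_mono sum_mono) auto
  finally show "(1 / real (b - n)) * SEMin (b - n) b dL $ j
      \<le> ((1 / real (card S)) *\<^sub>R (\<Sum>i\<in>S. grad (xs i) (ys i) th)) $ j"
    unfolding mean .
  have "(\<Sum>i\<in>S. ?g i) / card S \<le> (\<Sum>i\<in>S. dU i $ j) / card S"
    using dU_bound[OF in_batch th_in] by (intro divide_right_mono sum_mono) auto
  also have "\<dots> \<le> (1 / real (b - n)) * SEMax (b - n) b dU $ j"
    using mean_subset_le_mean_largest[OF S_sub m S_card] by (simp add: SEMax_def)
  finally show "((1 / real (card S)) *\<^sub>R (\<Sum>i\<in>S. grad (xs i) (ys i) th)) $ j
      \<le> (1 / real (b - n)) * SEMax (b - n) b dU $ j"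
    unfolding mean .
qed

end
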